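(* For every integer $N\ge 0$, let $T_{1\times 4}(5,N)$ be the number of tilings of a $5\times n$ rectangle, $n=4N/5$, by $N$ tiles of size $1\times 4$ (and $0$ if $4N/5\notin\mathbb{Z}$). Then, as formal power series, \[ \sum_{N\ge 0} T_{1\times 4}(5,N)\,z^N=\frac{(1-z^5)^3}{1-6z^5+6z^{10}-4z^{15}+z^{20}}. \]
   Context: A tiling of an $m\times n$ rectangle (width $m$, length $n$, made of $mn$ unit squares) by $a\times b$ tiles is a partition of the rectangle into non-overlapping axis-parallel $a\times b$ rectangles with integer corner coordinates, each placed in either of its two orientations. Tilings related by reflections or rotations of the rectangle are counted as distinct. The empty tiling counts once for $N=0$. *)

theory Defs
  imports Main "HOL-Computational_Algebra.Formal_Power_Series"
begin

(* Unit cells are pairs (i,j) of naturals; cell (i,j) is the unit square [i,i+1]x[j,j+1]. *)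

definition rect_cells :: "nat \<Rightarrow> nat \<Rightarrow> nat \<Rightarrow> nat \<Rightarrow> (nat \<times> nat) set" where
  "rect_cells x y w h = {x..<x+w} \<times> {y..<y+h}"

definition board :: "nat \<Rightarrow> nat \<Rightarrow> (nat \<times> nat) set" where
  "board m n = rect_cells 0 0 m n"

definition is_tile :: "nat \<Rightarrow> nat \<Rightarrow> (nat \<times> nat) set \<Rightarrow> bool" where
  "is_tile a b t \<longleftrightarrow> (\<exists>x y. t = rect_cells x y a b \<or> t = rect_cells x y b a)"

definition is_tiling :: "nat \<Rightarrow> nat \<Rightarrow> nat \<Rightarrow> nat \<Rightarrow> (nat \<times> nat) set set \<Rightarrow> bool" where
  "is_tiling a b m n T \<longleftrightarrow>
     (\<forall>t\<in>T. is_tile a b t) \<and>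
     (\<forall>t\<in>T. \<forall>t'\<in>T. t \<noteq> t' \<longrightarrow> t \<inter> t' = {}) \<and>
     \<Union>T = board m n"

definition T14_5 :: "nat \<Rightarrow> nat" where
  "T14_5 N = (if 5 dvd (4 * N)
      then card {T. is_tiling 1 4 5 (4 * N div 5) T \<and> card T = N}
      else 0)"

end

theory Submission
  imports Defs
begin

text \<open>Fill the strip of width 5 from the bottom, always covering the lowest, leftmost free cell:
the only tiles that can cover it are the vertical and the horizontal tile with that cell as their
lower left corner. Starting from a flat bottom, every region met is, up to translation and
reflection, a rectangle of height k + 4j with the bottom k < 4 cells of one outer column removed. The series H_k(u) counting these notched
rectangles by u^j satisfy H_0 = 1 + u (H_0 + 2 H_3) and H_(k+1) = H_k + u H_(k+1), hence
H_0 ((1 - u)^4 - 2u) = (1 - u)^3. A tiling of the 5 x 4j rectangle has 5j tiles, so the series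
of the theorem is H_0(z^5).\<close>

unbundle fps_syntax

section \<open>Tilings of arbitrary regions\<close>

definition tilings :: "nat \<Rightarrow> nat \<Rightarrow> (nat \<times> nat) set \<Rightarrow> (nat \<times> nat) set set set" where
  "tilings a b S = {T. (\<forall>t\<in>T. is_tile a b t) \<and> pairwise disjnt T \<and> \<Union>T = S}"

lemma is_tiling_iff_tilings: "is_tiling a b m n T \<longleftrightarrow> T \<in> tilings a b (board m n)"
  by (simp add: is_tiling_def tilings_def pairwise_def disjnt_def)

lemma card_tile: "is_tile a b t \<Longrightarrow> card t = a * b"
  unfolding is_tile_def rect_cells_def by (auto simp: card_cartesian_product)

lemma tilings_empty: "0 < a \<Longrightarrow> 0 < b \<Longrightarrow> tilings a b {} = {{}}"
  unfolding tilings_def using card_tile by fastforce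

lemma card_tiling:
  assumes "finite S" "T \<in> tilings a b S"
  shows "a * b * card T = card S"
proof -
  have tiles: "\<forall>t\<in>T. is_tile a b t" and disj: "pairwise disjnt T" and cover: "\<Union>T = S"
    using assms(2) unfolding tilings_def by auto
  have "finite T"
    using assms(1) cover finite_UnionD by blast
  moreover have "finite t" if "t \<in> T" for t
    using assms(1) cover that by (metis Union_upper finite_subset)
  ultimately have "card S = (\<Sum>t\<in>T. card t)"
    using card_Union_disjoint[OF disj] cover by simp
  also have "\<dots> = (\<Sum>t\<in>T. a * b)"
    using tiles by (intro sum.cong) (simp_all add: card_tile)
  finally show ?thesis by simp
qed

lemma finite_tilings: "finite S \<Longrightarrow> finite (tilings a b S)"
  by (rule finite_subset[of _ "Pow (Pow S)"]) (auto simp: tilings_def)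

lemma tilings_insert_iff:
  assumes "t \<notin> T"
  shows "insert t T \<in> tilings a b S \<longleftrightarrow>
    is_tile a b t \<and> t \<subseteq> S \<and> T \<in> tilings a b (S - t)"
proof
  assume "insert t T \<in> tilings a b S"
  then have "is_tile a b t" "\<forall>u\<in>T. is_tile a b u" "pairwise disjnt T" "t \<union> \<Union>T = S"
    "\<forall>u\<in>T. disjnt t u"
    using assms unfolding tilings_def by (auto simp: pairwise_insert)
  then show "is_tile a b t \<and> t \<subseteq> S \<and> T \<in> tilings a b (S - t)"
    unfolding tilings_def disjnt_def by blast
next
  assume "is_tile a b t \<and> t \<subseteq> S \<and> T \<in> tilings a b (S - t)"
  then show "insert t T \<in> tilings a b S"
    using assms unfolding tilings_def disjnt_def by (auto simp: pairwise_insert)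
qed

lemma card_tilings_remove_tile:
  assumes "finite S" "c \<in> S"
  shows "card (tilings a b S) =
    (\<Sum>t\<in>{t. is_tile a b t \<and> c \<in> t \<and> t \<subseteq> S}. card (tilings a b (S - t)))"
proof -
  define C where "C = {t. is_tile a b t \<and> c \<in> t \<and> t \<subseteq> S}"
  have avoid: "u \<notin> T" if "t \<in> C" "T \<in> tilings a b (S - t)" "c \<in> u" for t u T
    using that unfolding C_def tilings_def by blast
  have notin: "t \<notin> T" if "t \<in> C" "T \<in> tilings a b (S - t)" for t T
    using avoid[OF that] that(1) by (simp add: C_def)
  have "tilings a b S = (\<Union>t\<in>C. insert t ` tilings a b (S - t))"
  proof (intro equalityI subsetI)
    fix T assume T: "T \<in> tilings a b S"
    then obtain t where "t \<in> T" "c \<in> t"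
      using assms(2) unfolding tilings_def by blast
    with T show "T \<in> (\<Union>t\<in>C. insert t ` tilings a b (S - t))"
      using tilings_insert_iff[of t "T - {t}"] unfolding C_def
      by (auto simp: insert_absorb intro!: image_eqI[of T _ "T - {t}"])
  qed (use notin tilings_insert_iff in \<open>auto simp: C_def\<close>)
  moreover have "finite C"
    using assms(1) by (auto simp: C_def intro: finite_subset[of _ "Pow S"])
  moreover have "inj_on (insert t) (tilings a b (S - t))" if "t \<in> C" for t
    using notin[OF that] by (metis inj_onI insert_ident)
  moreover have "insert t ` tilings a b (S - t) \<inter> insert t' ` tilings a b (S - t') = {}"
    if "t \<in> C" "t' \<in> C" "t \<noteq> t'" for t t'
  proof -
    have "t \<notin> B" if "B \<in> tilings a b (S - t')" for B
      using avoid[OF \<open>t' \<in> C\<close> that] \<open>t \<in> C\<close> by (simp add: C_def)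
    then show ?thesis
      using \<open>t \<noteq> t'\<close> by (auto simp: insert_eq_iff)
  qed
  ultimately have "card (tilings a b S) = (\<Sum>t\<in>C. card (tilings a b (S - t)))"
    using assms(1) by (simp add: card_UN_disjoint finite_tilings card_image)
  then show ?thesis unfolding C_def .
qed

lemma image_tiling_in_tilings:
  assumes inv: "\<And>p. p \<in> S \<Longrightarrow> g (f p) = p"
    and tile: "\<And>t. t \<subseteq> S \<Longrightarrow> is_tile a b t \<Longrightarrow> is_tile a b (f ` t)"
    and T: "T \<in> tilings a b S"
  shows "image f ` T \<in> tilings a b (f ` S)"
proof -
  have inj: "inj_on f S"
    using inv by (rule inj_on_inverseI)
  have sub: "t \<subseteq> S" if "t \<in> T" for t
    using T that unfolding tilings_def by blast
  have "disjnt (f ` t) (f ` u)" if "t \<in> T" "u \<in> T" "f ` t \<noteq> f ` u" for t u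
  proof -
    have "t \<noteq> u"
      using that(3) by blast
    then have "disjnt t u"
      using T that(1,2) unfolding tilings_def pairwise_def by blast
    then show ?thesis
      using inj_on_image_Int[OF inj sub[OF that(1)] sub[OF that(2)]] by (simp add: disjnt_def)
  qed
  then show ?thesis
    using T tile sub unfolding tilings_def pairwise_def by auto
qed

lemma image_image_tiling_inverse:
  assumes inv: "\<And>p. p \<in> S \<Longrightarrow> g (f p) = p" and T: "T \<in> tilings a b S"
  shows "image g ` image f ` T = T"
proof -
  have "g ` f ` t = t" if "t \<subseteq> S" for t
  proof -
    have "g ` f ` t = (\<lambda>p. g (f p)) ` t"
      by (simp add: image_image)
    also have "\<dots> = (\<lambda>p. p) ` t"
      using inv that by (intro image_cong) auto
    finally show ?thesis
      by simp
  qed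
  moreover have "t \<subseteq> S" if "t \<in> T" for t
    using T that unfolding tilings_def by blast
  ultimately show ?thesis
    by (simp add: image_image cong: image_cong)
qed

lemma card_tilings_image:
  assumes inv: "\<And>p. p \<in> S \<Longrightarrow> g (f p) = p"
    and tile_f: "\<And>t. t \<subseteq> S \<Longrightarrow> is_tile a b t \<Longrightarrow> is_tile a b (f ` t)"
    and tile_g: "\<And>t. t \<subseteq> f ` S \<Longrightarrow> is_tile a b t \<Longrightarrow> is_tile a b (g ` t)"
  shows "card (tilings a b (f ` S)) = card (tilings a b S)"
proof -
  have inv': "\<And>q. q \<in> f ` S \<Longrightarrow> f (g q) = q"
    using inv by auto
  have "g ` f ` S = S"
    using inv by force
  then have "bij_betw (image (image f)) (tilings a b S) (tilings a b (f ` S))"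
    using image_tiling_in_tilings[of S g f, OF inv tile_f]
      image_tiling_in_tilings[of "f ` S" f g, OF inv' tile_g]
      image_image_tiling_inverse[of S g f, OF inv]
      image_image_tiling_inverse[of "f ` S" f g, OF inv']
    by (intro bij_betw_byWitness[where f' = "image (image g)"]) auto
  then show ?thesis
    by (simp add: bij_betw_same_card)
qed

lemma rect_cells_empty_iff: "rect_cells x y p q = {} \<longleftrightarrow> p = 0 \<or> q = 0"
  unfolding rect_cells_def by auto

lemma image_mirror_rect_cells:
  assumes "x + p \<le> w"
  shows "(\<lambda>(i, j). (w - 1 - i, j)) ` rect_cells x y p q = rect_cells (w - (x + p)) y p q"
proof (intro set_eqI iffI)
  fix c assume "c \<in> rect_cells (w - (x + p)) y p q"
  then obtain i j where "c = (i, j)" "w - (x + p) \<le> i" "i < w - x" "y \<le> j" "j < y + q"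
    using assms unfolding rect_cells_def by auto
  then show "c \<in> (\<lambda>(i, j). (w - 1 - i, j)) ` rect_cells x y p q"
    using assms unfolding rect_cells_def by (intro image_eqI[of _ _ "(w - 1 - i, j)"]) auto
qed (use assms in \<open>auto simp: rect_cells_def\<close>)

lemma is_tile_image_mirror:
  assumes "t \<subseteq> {..<w} \<times> UNIV" "is_tile a b t"
  shows "is_tile a b ((\<lambda>(i, j). (w - 1 - i, j)) ` t)"
proof (cases "t = {}")
  case False
  from assms(2) obtain x y p q
    where t: "t = rect_cells x y p q" and pq: "(p, q) = (a, b) \<or> (p, q) = (b, a)"
    unfolding is_tile_def by blast
  have "(x + p - 1, y) \<in> t"
    using False unfolding t rect_cells_def by (auto simp: rect_cells_empty_iff)
  then have "x + p \<le> w"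
    using assms(1) by auto
  then show ?thesis
    using pq unfolding t image_mirror_rect_cells[OF \<open>x + p \<le> w\<close>] is_tile_def by blast
qed (use assms in simp)

lemma image_shift_rect_cells:
  "(\<lambda>(i, j). (i, j + d)) ` rect_cells x y p q = rect_cells x (y + d) p q"
proof (intro set_eqI iffI)
  fix c assume "c \<in> rect_cells x (y + d) p q"
  then obtain i j where "c = (i, j)" "x \<le> i" "i < x + p" "y + d \<le> j" "j < y + d + q"
    unfolding rect_cells_def by auto
  then show "c \<in> (\<lambda>(i, j). (i, j + d)) ` rect_cells x y p q"
    unfolding rect_cells_def by (intro image_eqI[of _ _ "(i, j - d)"]) auto
qed (auto simp: rect_cells_def)

lemma is_tile_image_shift: "is_tile a b t \<Longrightarrow> is_tile a b ((\<lambda>(i, j). (i, j + d)) ` t)"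
  unfolding is_tile_def by (metis image_shift_rect_cells)

lemma is_tile_image_unshift:
  assumes "t \<subseteq> UNIV \<times> {d..}" "is_tile a b t"
  shows "is_tile a b ((\<lambda>(i, j). (i, j - d)) ` t)"
proof (cases "t = {}")
  case False
  from assms(2) obtain x y p q
    where t: "t = rect_cells x y p q" and pq: "(p, q) = (a, b) \<or> (p, q) = (b, a)"
    unfolding is_tile_def by blast
  have "(x, y) \<in> t"
    using False unfolding t rect_cells_def by (auto simp: rect_cells_empty_iff)
  then have "d \<le> y"
    using assms(1) by auto
  then have "t = (\<lambda>(i, j). (i, j + d)) ` rect_cells x (y - d) p q"
    unfolding t image_shift_rect_cells by simp
  then have "(\<lambda>(i, j). (i, j - d)) ` t = rect_cells x (y - d) p q"
    by (simp add: image_image case_prod_beta)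
  then show ?thesis
    using pq unfolding is_tile_def by blast
qed (use assms in simp)

section \<open>Regions above a profile\<close>

definition profile_region :: "nat \<Rightarrow> nat \<Rightarrow> (nat \<Rightarrow> nat) \<Rightarrow> (nat \<times> nat) set" where
  "profile_region w n h = {(x, y). x < w \<and> h x \<le> y \<and> y < n}"

lemma profile_region_cong:
  "\<forall>i<w. h i = g i \<Longrightarrow> profile_region w n h = profile_region w n g"
  unfolding profile_region_def by auto

lemma finite_profile_region: "finite (profile_region w n h)"
  by (rule finite_subset[of _ "{..<w} \<times> {..<n}"]) (auto simp: profile_region_def)

lemma card_tilings_profile_mirror:
  "card (tilings a b (profile_region w n (\<lambda>i. h (w - 1 - i)))) =
   card (tilings a b (profile_region w n h))"
proof -
  let ?m = "\<lambda>(i, j). (w - 1 - i, j)"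
  have image: "?m ` profile_region w n h = profile_region w n (\<lambda>i. h (w - 1 - i))"
  proof (intro set_eqI iffI)
    fix c assume "c \<in> profile_region w n (\<lambda>i. h (w - 1 - i))"
    then obtain i j where "c = (i, j)" "i < w" "h (w - 1 - i) \<le> j" "j < n"
      unfolding profile_region_def by auto
    then show "c \<in> ?m ` profile_region w n h"
      unfolding profile_region_def by (intro image_eqI[of _ _ "(w - 1 - i, j)"]) auto
  qed (auto simp: profile_region_def)
  have strip: "profile_region w n h \<subseteq> {..<w} \<times> UNIV"
    by (auto simp: profile_region_def)
  have "card (tilings a b (?m ` profile_region w n h)) = card (tilings a b (profile_region w n h))"
  proof (rule card_tilings_image)
    show "?m (?m p) = p" if "p \<in> profile_region w n h" for p
      using that strip by auto
    show "is_tile a b (?m ` t)" if "t \<subseteq> profile_region w n h" "is_tile a b t" for t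
      using that strip by (intro is_tile_image_mirror) auto
    show "is_tile a b (?m ` t)" if "t \<subseteq> ?m ` profile_region w n h" "is_tile a b t" for t
      using that strip unfolding image by (intro is_tile_image_mirror) (auto simp: profile_region_def)
  qed
  then show ?thesis
    unfolding image .
qed

lemma card_tilings_profile_shift:
  assumes "d \<le> n"
  shows "card (tilings a b (profile_region w n (\<lambda>i. d + h i))) =
    card (tilings a b (profile_region w (n - d) h))"
proof -
  let ?up = "\<lambda>(i, j). (i, j + d)" and ?down = "\<lambda>(i, j). (i, j - d)"
  have image: "?up ` profile_region w (n - d) h = profile_region w n (\<lambda>i. d + h i)"
  proof (intro set_eqI iffI)
    fix c assume "c \<in> profile_region w n (\<lambda>i. d + h i)"
    then obtain i j where "c = (i, j)" "i < w" "d + h i \<le> j" "j < n"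
      unfolding profile_region_def by auto
    then show "c \<in> ?up ` profile_region w (n - d) h"
      unfolding profile_region_def by (intro image_eqI[of _ _ "(i, j - d)"]) auto
  qed (use assms in \<open>auto simp: profile_region_def\<close>)
  have "card (tilings a b (?up ` profile_region w (n - d) h)) =
    card (tilings a b (profile_region w (n - d) h))"
  proof (rule card_tilings_image)
    show "?down (?up p) = p" for p :: "nat \<times> nat"
      by (cases p) auto
    show "is_tile a b (?up ` t)" if "is_tile a b t" for t
      using is_tile_image_shift[OF that] .
    show "is_tile a b (?down ` t)" if "t \<subseteq> ?up ` profile_region w (n - d) h" "is_tile a b t" for t
    proof (rule is_tile_image_unshift)
      show "t \<subseteq> UNIV \<times> {d..}"
        using that(1) by auto
    qed (fact that(2))
  qed
  then show ?thesis
    unfolding image .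
qed

lemma tiles_containing_lowest_cell:
  fixes h :: "nat \<Rightarrow> nat" and x0 :: nat
  defines "y0 \<equiv> h x0"
  assumes x0: "x0 < w" and y0: "y0 < n"
    and lowest: "\<And>i. i < w \<Longrightarrow> y0 \<le> h i" and leftmost: "\<And>i. i < x0 \<Longrightarrow> y0 < h i"
  shows "{t. is_tile 1 4 t \<and> (x0, y0) \<in> t \<and> t \<subseteq> profile_region w n h} =
    (if y0 + 4 \<le> n then {rect_cells x0 y0 1 4} else {}) \<union>
    (if x0 + 4 \<le> w \<and> h (x0 + 1) = y0 \<and> h (x0 + 2) = y0 \<and> h (x0 + 3) = y0
     then {rect_cells x0 y0 4 1} else {})"
    (is "?L = ?V \<union> ?H")
proof (intro equalityI subsetI)
  fix t assume "t \<in> ?L"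
  then have t: "(x0, y0) \<in> t" "t \<subseteq> profile_region w n h"
    and "\<exists>x y. t = {x} \<times> {y..<y + 4} \<or> t = {x..<x + 4} \<times> {y}"
    unfolding is_tile_def rect_cells_def by auto
  then obtain x y where "t = {x} \<times> {y..<y + 4} \<or> t = {x..<x + 4} \<times> {y}"
    by blast
  then show "t \<in> ?V \<union> ?H"
  proof
    assume vertical: "t = {x} \<times> {y..<y + 4}"
    then have "(x0, y) \<in> profile_region w n h" "(x0, y + 3) \<in> profile_region w n h"
      using t by auto
    then show ?thesis
      using t(1) vertical unfolding profile_region_def rect_cells_def y0_def by auto
  next
    assume horizontal: "t = {x..<x + 4} \<times> {y}"
    then have "y = y0"
      using t(1) by auto
    then have "(i, y0) \<in> profile_region w n h" if "x \<le> i" "i < x + 4" for i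
      using t horizontal that by auto
    then have below: "h i \<le> y0 \<and> i < w" if "x \<le> i" "i < x + 4" for i
      using that unfolding profile_region_def by auto
    have "x = x0"
      using t(1) horizontal below[of x] leftmost[of x] by (cases "x < x0") auto
    have "x0 + 4 \<le> w"
      using below[of "x0 + 3"] \<open>x = x0\<close> by simp
    have level: "h (x0 + k) = y0" if "k < 4" for k
      using below[of "x0 + k"] lowest[of "x0 + k"] \<open>x = x0\<close> that by fastforce
    show ?thesis
      using horizontal \<open>x = x0\<close> \<open>y = y0\<close> \<open>x0 + 4 \<le> w\<close> level[of 1] level[of 2] level[of 3]
      unfolding rect_cells_def by simp
  qed
next
  fix t assume "t \<in> ?V \<union> ?H"
  then consider "y0 + 4 \<le> n" "t = rect_cells x0 y0 1 4"
    | "x0 + 4 \<le> w" "h (x0 + 1) = y0" "h (x0 + 2) = y0" "h (x0 + 3) = y0" "t = rect_cells x0 y0 4 1"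
    by (auto split: if_splits)
  then show "t \<in> ?L"
  proof cases
    case 1
    then show ?thesis
      using x0 unfolding is_tile_def profile_region_def rect_cells_def y0_def by auto
  next
    case 2
    have "h i = y0" if "x0 \<le> i" "i < x0 + 4" for i
    proof -
      have "i = x0 \<or> i = x0 + 1 \<or> i = x0 + 2 \<or> i = x0 + 3"
        using that by arith
      then show ?thesis
        using 2 by (auto simp: y0_def)
    qed
    then show ?thesis
      using 2 y0 unfolding is_tile_def profile_region_def rect_cells_def by auto
  qed
qed

lemma profile_region_remove_vertical:
  assumes "\<forall>i<w. h' i = (if i = x0 then h x0 + 4 else h i)"
  shows "profile_region w n h - rect_cells x0 (h x0) 1 4 = profile_region w n h'"
proof -
  have "(x, y) \<in> profile_region w n h - rect_cells x0 (h x0) 1 4 \<longleftrightarrow> (x, y) \<in> profile_region w n h'"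
    for x y
    using assms by (cases "x = x0") (auto simp: profile_region_def rect_cells_def)
  then show ?thesis
    by auto
qed

lemma profile_region_remove_horizontal:
  assumes "h (x0 + 1) = h x0" "h (x0 + 2) = h x0" "h (x0 + 3) = h x0"
    and "\<forall>i<w. h' i = (if x0 \<le> i \<and> i < x0 + 4 then h x0 + 1 else h i)"
  shows "profile_region w n h - rect_cells x0 (h x0) 4 1 = profile_region w n h'"
proof -
  have level: "h i = h x0" if "x0 \<le> i" "i < x0 + 4" for i
  proof -
    have "i = x0 \<or> i = x0 + 1 \<or> i = x0 + 2 \<or> i = x0 + 3"
      using that by arith
    then show ?thesis
      using assms(1-3) by auto
  qed
  have "(x, y) \<in> profile_region w n h - rect_cells x0 (h x0) 4 1 \<longleftrightarrow> (x, y) \<in> profile_region w n h'"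
    for x y
    using assms(4) level[of x]
    by (cases "x0 \<le> x \<and> x < x0 + 4") (auto simp: profile_region_def rect_cells_def)
  then show ?thesis
    by auto
qed

lemma card_tilings_profile_step:
  fixes h :: "nat \<Rightarrow> nat" and x0 :: nat
  defines "y0 \<equiv> h x0"
  assumes x0: "x0 < w" and y0: "y0 < n"
    and lowest: "\<forall>i<w. y0 \<le> h i" and leftmost: "\<forall>i<x0. y0 < h i"
    and hv: "\<forall>i<w. hv i = (if i = x0 then y0 + 4 else h i)"
    and hh: "\<forall>i<w. hh i = (if x0 \<le> i \<and> i < x0 + 4 then y0 + 1 else h i)"
  shows "card (tilings 1 4 (profile_region w n h)) =
    (if y0 + 4 \<le> n then card (tilings 1 4 (profile_region w n hv)) else 0) +
    (if x0 + 4 \<le> w \<and> h (x0 + 1) = y0 \<and> h (x0 + 2) = y0 \<and> h (x0 + 3) = y0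
     then card (tilings 1 4 (profile_region w n hh)) else 0)"
proof -
  let ?S = "profile_region w n h"
  let ?count = "\<lambda>t. card (tilings 1 4 (?S - t))"
  let ?V = "if y0 + 4 \<le> n then {rect_cells x0 y0 1 4} else {}"
    and ?H = "if x0 + 4 \<le> w \<and> h (x0 + 1) = y0 \<and> h (x0 + 2) = y0 \<and> h (x0 + 3) = y0
      then {rect_cells x0 y0 4 1} else {}"
  have "(x0, y0) \<in> ?S"
    using x0 y0 unfolding profile_region_def y0_def by simp
  then have "card (tilings 1 4 ?S) =
    (\<Sum>t\<in>{t. is_tile 1 4 t \<and> (x0, y0) \<in> t \<and> t \<subseteq> ?S}. ?count t)"
    by (rule card_tilings_remove_tile[OF finite_profile_region])
  also have "\<dots> = (\<Sum>t\<in>?V \<union> ?H. ?count t)"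
    using tiles_containing_lowest_cell[of x0 w h n] x0 y0 lowest leftmost unfolding y0_def by simp
  also have "\<dots> = (\<Sum>t\<in>?V. ?count t) + (\<Sum>t\<in>?H. ?count t)"
  proof (rule sum.union_disjoint)
    have "(x0, y0 + 1) \<in> rect_cells x0 y0 1 4 - rect_cells x0 y0 4 1"
      unfolding rect_cells_def by simp
    then show "?V \<inter> ?H = {}"
      by auto
  qed simp_all
  also have "(\<Sum>t\<in>?V. ?count t) =
    (if y0 + 4 \<le> n then card (tilings 1 4 (profile_region w n hv)) else 0)"
    using profile_region_remove_vertical[of w hv x0 h n] hv unfolding y0_def by simp
  also have "(\<Sum>t\<in>?H. ?count t) =
    (if x0 + 4 \<le> w \<and> h (x0 + 1) = y0 \<and> h (x0 + 2) = y0 \<and> h (x0 + 3) = y0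
     then card (tilings 1 4 (profile_region w n hh)) else 0)"
    using profile_region_remove_horizontal[of h x0 w hh n] hh unfolding y0_def by simp
  finally show ?thesis .
qed

lemma card_tilings_profile_vertical:
  assumes "x0 < w" "h x0 < n" "\<forall>i<w. h x0 \<le> h i" "\<forall>i<x0. h x0 < h i"
    and "\<forall>i<w. hv i = (if i = x0 then h x0 + 4 else h i)"
    and no_horizontal: "\<not> (x0 + 4 \<le> w \<and> h (x0 + 1) = h x0 \<and> h (x0 + 2) = h x0 \<and> h (x0 + 3) = h x0)"
  shows "card (tilings 1 4 (profile_region w n h)) =
    (if h x0 + 4 \<le> n then card (tilings 1 4 (profile_region w n hv)) else 0)"
  using card_tilings_profile_step[of x0 w h n hv "\<lambda>i. if x0 \<le> i \<and> i < x0 + 4 then h x0 + 1 else h i"]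
    assms
  unfolding if_not_P[OF no_horizontal] by simp

section \<open>The strip of width 5\<close>

definition heights :: "nat \<Rightarrow> nat \<Rightarrow> nat \<Rightarrow> nat \<Rightarrow> nat \<Rightarrow> nat \<Rightarrow> nat" where
  "heights a0 a1 a2 a3 a4 i =
    (if i = 0 then a0 else if i = 1 then a1 else if i = 2 then a2 else if i = 3 then a3 else a4)"

abbreviation strip_count :: "nat \<Rightarrow> (nat \<Rightarrow> nat) \<Rightarrow> nat" where
  "strip_count n h \<equiv> card (tilings 1 4 (profile_region 5 n h))"

lemma strip_count_mirror:
  "strip_count n (heights a0 a1 a2 a3 a4) = strip_count n (heights a4 a3 a2 a1 a0)"
proof -
  have "profile_region 5 n (\<lambda>i. heights a0 a1 a2 a3 a4 (5 - 1 - i)) =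
    profile_region 5 n (heights a4 a3 a2 a1 a0)"
    by (rule profile_region_cong) (simp add: heights_def All_less_Suc numeral_eq_Suc)
  then show ?thesis
    using card_tilings_profile_mirror[of 1 4 5 n "heights a0 a1 a2 a3 a4"] by simp
qed

lemma strip_count_shift:
  assumes "d \<le> n"
  shows "strip_count n (heights (a0 + d) (a1 + d) (a2 + d) (a3 + d) (a4 + d)) =
    strip_count (n - d) (heights a0 a1 a2 a3 a4)"
proof -
  have "heights (a0 + d) (a1 + d) (a2 + d) (a3 + d) (a4 + d) = (\<lambda>i. d + heights a0 a1 a2 a3 a4 i)"
    by (auto simp: heights_def)
  then show ?thesis
    using card_tilings_profile_shift[OF assms] by simp
qed

lemma strip_count_lowered_first:
  assumes "a < c" "a < n"
  shows "strip_count n (heights a c c c c) =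
    (if a + 4 \<le> n then strip_count n (heights (a + 4) c c c c) else 0)"
  using card_tilings_profile_vertical[of 0 5 "heights a c c c c" n "heights (a + 4) c c c c"] assms
  by (simp add: heights_def All_less_Suc numeral_eq_Suc)

lemma strip_count_flat:
  assumes "b < n"
  shows "strip_count n (heights b b b b b) =
    (if b + 4 \<le> n then strip_count n (heights (b + 4) b b b b) +
      strip_count n (heights (b + 4) (b + 1) (b + 1) (b + 1) (b + 1)) else 0)"
proof -
  have "strip_count n (heights b b b b b) =
    (if b + 4 \<le> n then strip_count n (heights (b + 4) b b b b) else 0) +
    strip_count n (heights (b + 1) (b + 1) (b + 1) (b + 1) b)"
    using card_tilings_profile_step[of 0 5 "heights b b b b b" n "heights (b + 4) b b b b"
        "heights (b + 1) (b + 1) (b + 1) (b + 1) b"] assms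
    by (simp add: heights_def All_less_Suc numeral_eq_Suc)
  moreover have "strip_count n (heights (b + 1) (b + 1) (b + 1) (b + 1) b) =
    (if b + 4 \<le> n then strip_count n (heights (b + 1) (b + 1) (b + 1) (b + 1) (b + 4)) else 0)"
    using card_tilings_profile_vertical[of 4 5 "heights (b + 1) (b + 1) (b + 1) (b + 1) b" n
        "heights (b + 1) (b + 1) (b + 1) (b + 1) (b + 4)"] assms
    by (simp add: heights_def All_less_Suc numeral_eq_Suc)
  ultimately show ?thesis
    using strip_count_mirror[of n "b + 1" "b + 1" "b + 1" "b + 1" "b + 4"] by simp
qed

lemma strip_count_raised_first:
  assumes "b < a" "b < n"
  shows "strip_count n (heights a b b b b) =
    (if b + 4 \<le> n then strip_count n (heights a (b + 4) (b + 4) (b + 4) (b + 4)) else 0) +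
    strip_count n (heights a (b + 1) (b + 1) (b + 1) (b + 1))"
proof -
  have "strip_count n (heights a b b b b) =
    (if b + 4 \<le> n then strip_count n (heights a (b + 4) b b b) else 0) +
    strip_count n (heights a (b + 1) (b + 1) (b + 1) (b + 1))"
    using card_tilings_profile_step[of 1 5 "heights a b b b b" n "heights a (b + 4) b b b"
        "heights a (b + 1) (b + 1) (b + 1) (b + 1)"] assms
    by (simp add: heights_def All_less_Suc numeral_eq_Suc)
  moreover have "strip_count n (heights a (b + 4) b b b) =
    strip_count n (heights a (b + 4) (b + 4) b b)" if "b + 4 \<le> n"
    using card_tilings_profile_vertical[of 2 5 "heights a (b + 4) b b b" n
        "heights a (b + 4) (b + 4) b b"] assms that
    by (simp add: heights_def All_less_Suc numeral_eq_Suc)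
  moreover have "strip_count n (heights a (b + 4) (b + 4) b b) =
    strip_count n (heights a (b + 4) (b + 4) (b + 4) b)" if "b + 4 \<le> n"
    using card_tilings_profile_vertical[of 3 5 "heights a (b + 4) (b + 4) b b" n
        "heights a (b + 4) (b + 4) (b + 4) b"] assms that
    by (simp add: heights_def All_less_Suc numeral_eq_Suc)
  moreover have "strip_count n (heights a (b + 4) (b + 4) (b + 4) b) =
    strip_count n (heights a (b + 4) (b + 4) (b + 4) (b + 4))" if "b + 4 \<le> n"
    using card_tilings_profile_vertical[of 4 5 "heights a (b + 4) (b + 4) (b + 4) b" n
        "heights a (b + 4) (b + 4) (b + 4) (b + 4)"] assms that
    by (simp add: heights_def All_less_Suc numeral_eq_Suc)
  ultimately show ?thesis
    by simp
qed

text \<open>The 5 x (k + 4j) rectangle without the bottom k cells of column 0.\<close>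

definition notched_count :: "nat \<Rightarrow> nat \<Rightarrow> nat" where
  "notched_count k j = strip_count (k + 4 * j) (heights k 0 0 0 0)"

lemma notched_count_0_0: "notched_count 0 0 = 1"
proof -
  have "profile_region 5 0 (heights 0 0 0 0 0) = {}"
    by (simp add: profile_region_def)
  then show ?thesis
    by (simp add: notched_count_def tilings_empty)
qed

lemma notched_count_0_Suc: "notched_count 0 (Suc j) = notched_count 0 j + 2 * notched_count 3 j"
proof -
  let ?n = "4 + 4 * j"
  have "notched_count 0 (Suc j) = strip_count ?n (heights 0 0 0 0 0)"
    by (simp add: notched_count_def)
  also have "\<dots> = strip_count ?n (heights 4 0 0 0 0) + strip_count ?n (heights 4 1 1 1 1)"
    using strip_count_flat[of 0 ?n] by simp
  also have "\<dots> = strip_count ?n (heights 4 4 4 4 4) + 2 * strip_count ?n (heights 4 1 1 1 1)"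
    using strip_count_raised_first[of 0 4 ?n] by simp
  also have "strip_count ?n (heights 4 4 4 4 4) = notched_count 0 j"
    using strip_count_shift[of 4 ?n 0 0 0 0 0] by (simp add: notched_count_def)
  also have "strip_count ?n (heights 4 1 1 1 1) = notched_count 3 j"
    using strip_count_shift[of 1 ?n 3 0 0 0 0] by (simp add: notched_count_def)
  finally show ?thesis .
qed

lemma notched_count_Suc:
  assumes "k < 3"
  shows "notched_count (Suc k) j =
    notched_count k j + (case j of 0 \<Rightarrow> 0 | Suc i \<Rightarrow> notched_count (Suc k) i)"
proof -
  let ?n = "Suc k + 4 * j"
  have "notched_count (Suc k) j = strip_count ?n (heights (Suc k) 0 0 0 0)"
    by (simp add: notched_count_def)
  also have "\<dots> = strip_count ?n (heights (Suc k) 1 1 1 1) +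
    (if 4 \<le> ?n then strip_count ?n (heights (Suc k) 4 4 4 4) else 0)"
    using strip_count_raised_first[of 0 "Suc k" ?n] by simp
  also have "strip_count ?n (heights (Suc k) 1 1 1 1) = notched_count k j"
    using strip_count_shift[of 1 ?n k 0 0 0 0] by (simp add: notched_count_def)
  also have "(if 4 \<le> ?n then strip_count ?n (heights (Suc k) 4 4 4 4) else 0) =
    (case j of 0 \<Rightarrow> 0 | Suc i \<Rightarrow> notched_count (Suc k) i)"
  proof (cases j)
    case (Suc i)
    have "strip_count ?n (heights (Suc k) 4 4 4 4) = strip_count ?n (heights (Suc k + 4) 4 4 4 4)"
      using strip_count_lowered_first[of "Suc k" 4 ?n] assms Suc by simp
    also have "\<dots> = notched_count (Suc k) i"
      using strip_count_shift[of 4 ?n "Suc k" 0 0 0 0] Suc by (simp add: notched_count_def)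
    finally show ?thesis
      using Suc by simp
  qed (use assms in simp)
  finally show ?thesis .
qed

lemma T14_5_eq_notched_count: "T14_5 N = (if 5 dvd N then notched_count 0 (N div 5) else 0)"
proof (cases "5 dvd N")
  case True
  then obtain j where N: "N = 5 * j"
    by blast
  have board: "board 5 (4 * j) = profile_region 5 (4 * j) (heights 0 0 0 0 0)"
    by (auto simp: board_def rect_cells_def profile_region_def heights_def)
  have "card T = N" if "T \<in> tilings 1 4 (board 5 (4 * j))" for T
    using card_tiling[OF _ that] N by (simp add: board_def rect_cells_def card_cartesian_product)
  then have "{T. is_tiling 1 4 5 (4 * j) T \<and> card T = N} = tilings 1 4 (board 5 (4 * j))"
    by (auto simp: is_tiling_iff_tilings)
  then show ?thesis
    using N by (simp add: T14_5_def board notched_count_def)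
next
  case False
  then have "\<not> 5 dvd 4 * N"
    by presburger
  with False show ?thesis
    by (simp add: T14_5_def)
qed

section \<open>Generating functions\<close>

definition notched_fps :: "nat \<Rightarrow> 'a :: comm_ring_1 fps" where
  "notched_fps k = Abs_fps (\<lambda>j. of_nat (notched_count k j))"

lemma notched_fps_0: "notched_fps 0 = 1 + fps_X * (notched_fps 0 + 2 * notched_fps 3)"
proof (rule fps_ext)
  fix j
  show "notched_fps 0 $ j = (1 + fps_X * (notched_fps 0 + 2 * notched_fps 3)) $ j"
    by (cases j) (simp_all add: notched_fps_def notched_count_0_0 notched_count_0_Suc numeral_fps_const)
qed

lemma notched_fps_Suc:
  "k < 3 \<Longrightarrow> notched_fps (Suc k) = notched_fps k + fps_X * notched_fps (Suc k)"
  by (rule fps_ext) (simp add: notched_fps_def notched_count_Suc[of k] fps_X_mult_nth split: nat.split)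

lemma notched_fps_0_equation:
  "notched_fps 0 * ((1 - fps_X) ^ 4 - 2 * fps_X) = ((1 - fps_X) ^ 3 :: 'a :: idom fps)"
proof -
  have "notched_fps 1 = notched_fps 0 + fps_X * (notched_fps 1 :: 'a fps)"
    "notched_fps 2 = notched_fps 1 + fps_X * (notched_fps 2 :: 'a fps)"
    "notched_fps 3 = notched_fps 2 + fps_X * (notched_fps 3 :: 'a fps)"
    using notched_fps_Suc[of 0] notched_fps_Suc[of 1] notched_fps_Suc[of 2]
    by (simp_all add: numeral_eq_Suc)
  moreover have "notched_fps 0 = 1 + fps_X * (notched_fps 0 + 2 * notched_fps 3 :: 'a fps)"
    by (rule notched_fps_0)
  ultimately show ?thesis
    by algebra
qed

lemma fps_compose_X_power_nth:
  assumes "0 < k"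
  shows "(f oo fps_X ^ k) $ n = (if k dvd n then f $ (n div k) else (0 :: 'a :: comm_ring_1))"
proof -
  have "(f oo fps_X ^ k) $ n = (\<Sum>i = 0..n. if n = k * i then f $ i else 0)"
    by (simp add: fps_compose_nth power_mult[symmetric] fps_X_power_nth if_distrib cong: if_cong)
  also have "\<dots> = (\<Sum>i\<in>{0..n} \<inter> {n div k}. if k dvd n then f $ i else 0)"
    using assms by (intro sum.mono_neutral_cong_right) (auto simp: dvd_def)
  also have "\<dots> = (if k dvd n then f $ (n div k) else 0)"
    by (simp add: div_le_dividend)
  finally show ?thesis .
qed

theorem mainTheorem4:
  shows "Abs_fps (\<lambda>N. of_nat (T14_5 N) :: rat) =
    (1 - fps_X ^ 5) ^ 3 /
    (1 - 6 * fps_X ^ 5 + 6 * fps_X ^ 10 - 4 * fps_X ^ 15 + fps_X ^ 20)"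
proof -
  let ?G = "Abs_fps (\<lambda>N. of_nat (T14_5 N) :: rat)"
  let ?Q = "1 - 6 * fps_X ^ 5 + 6 * fps_X ^ 10 - 4 * fps_X ^ 15 + fps_X ^ 20 :: rat fps"
  have G: "?G = notched_fps 0 oo fps_X ^ 5"
    by (rule fps_ext) (simp add: fps_compose_X_power_nth T14_5_eq_notched_count notched_fps_def)
  have "(notched_fps 0 * ((1 - fps_X) ^ 4 - 2 * fps_X)) oo fps_X ^ 5 =
    ((1 - fps_X) ^ 3 :: rat fps) oo fps_X ^ 5"
    by (simp only: notched_fps_0_equation)
  then have "?G * ((1 - fps_X ^ 5) ^ 4 - 2 * fps_X ^ 5) = (1 - fps_X ^ 5) ^ 3"
    unfolding G
    by (simp add: fps_compose_mult_distrib fps_compose_sub_distrib fps_compose_power[symmetric])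
  moreover have "(1 - fps_X ^ 5) ^ 4 - 2 * fps_X ^ 5 = ?Q"
    by algebra
  moreover have "?Q $ 0 = 1"
    by (simp add: numeral_fps_const)
  then have "?Q \<noteq> 0"
    by (metis fps_zero_nth zero_neq_one)
  ultimately show ?thesis
    by (metis nonzero_mult_div_cancel_right)
qed

end
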